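(* Let $(\Gamma,c)$ be a real congruence group with $c=c_0$ (where $c_0(x+iy)=-x+iy$) and such that $\Gamma$ is contained in (the image in $\mathrm{PSL}_2(\mathbf{Z})$ of) $\Gamma_0(N)$ for some $N>2$. Then $X_\Gamma$ has no real elliptic point of even order.
   Context: $\mathfrak{h}$ is the upper half-plane. For a complex conjugation $c$ (anti-holomorphic involution of $\mathfrak h$) and $\gamma\in\mathrm{PSL}_2(\mathbf{R})$, $\gamma^c$ denotes $c\gamma c$. A real congruence group is a pair $(\Gamma,c)$ where $\Gamma\subseteq\mathrm{PSL}_2(\mathbf{Z})$, $c$ is a complex conjugation with $\Gamma^c=\Gamma$, and for some $N\ge1$, $\Gamma$ contains $\Gamma(N)$ (image of matrices $\equiv I\bmod N$) and $\Gamma(N)^c=\Gamma(N)$. $X_\Gamma=\mathfrak{h}^*/\Gamma$ with $\mathfrak h^*=\mathfrak h\cup\mathbf{Q}\mathbf{P}^1$, and $c$ descends to an involution of $X_\Gamma$; a real point is a fixed point. An elliptic point of even order is a point of $\mathfrak{h}$ whose stabilizer in $\Gamma$ has even order. $\Gamma_0(N)$ consists of matrices in $\mathrm{SL}_2(\mathbf{Z})$ with lower-left entry divisible by $N$. *)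

theory Defs
  imports Complex_Main "HOL-Algebra.Group"
begin

text \<open>Integer 2x2 matrices (a,b,c,d) standing for [[a,b],[c,d]].\<close>
type_synonym mat2 = "int \<times> int \<times> int \<times> int"

definition sl2z :: "mat2 set" where
  "sl2z = {(a,b,c,d). a*d - b*c = 1}"

fun mmul :: "mat2 \<Rightarrow> mat2 \<Rightarrow> mat2" where
  "mmul (a,b,c,d) (a',b',c',d') = (a*a' + b*c', a*b' + b*d', c*a' + d*c', c*b' + d*d')"

fun mneg :: "mat2 \<Rightarrow> mat2" where
  "mneg (a,b,c,d) = (-a,-b,-c,-d)"

definition pclass :: "mat2 \<Rightarrow> mat2 set" where
  "pclass M = {M, mneg M}"

definition psl2z :: "mat2 set set" where
  "psl2z = pclass ` sl2z"

definition pmul :: "mat2 set \<Rightarrow> mat2 set \<Rightarrow> mat2 set" where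
  "pmul X Y = {mmul A B | A B. A \<in> X \<and> B \<in> Y}"

definition PSL2Z :: "mat2 set monoid" where
  "PSL2Z = \<lparr>carrier = psl2z, mult = pmul, one = pclass (1,0,0,1)\<rparr>"

definition Gamma_princ :: "nat \<Rightarrow> mat2 set set" where
  "Gamma_princ N = pclass ` {(a,b,c,d) \<in> sl2z.
      int N dvd (a - 1) \<and> int N dvd b \<and> int N dvd c \<and> int N dvd (d - 1)}"

definition Gamma0 :: "nat \<Rightarrow> mat2 set set" where
  "Gamma0 N = pclass ` {(a,b,c,d) \<in> sl2z. int N dvd c}"

definition uhp :: "complex set" where
  "uhp = {z. Im z > 0}"

fun moeb :: "mat2 \<Rightarrow> complex \<Rightarrow> complex" where
  "moeb (a,b,c,d) z = (of_int a * z + of_int b) / (of_int c * z + of_int d)"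

definition act :: "mat2 set \<Rightarrow> complex \<Rightarrow> complex" where
  "act X z = moeb (SOME M. M \<in> X) z"

definition c0 :: "complex \<Rightarrow> complex" where
  "c0 z = - cnj z"

definition c0_stable :: "mat2 set set \<Rightarrow> bool" where
  "c0_stable S \<longleftrightarrow>
     {(\<lambda>z\<in>uhp. c0 (act g (c0 z))) | g. g \<in> S} = {(\<lambda>z\<in>uhp. act g z) | g. g \<in> S}"

definition real_congruence_group_c0 :: "mat2 set set \<Rightarrow> bool" where
  "real_congruence_group_c0 G \<longleftrightarrow>
     subgroup G PSL2Z \<and> c0_stable G \<and>
     (\<exists>N::nat. N \<ge> 1 \<and> Gamma_princ N \<subseteq> G \<and> c0_stable (Gamma_princ N))"

definition stab :: "mat2 set set \<Rightarrow> complex \<Rightarrow> mat2 set set" where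
  "stab G z = {g \<in> G. act g z = z}"

definition elliptic_even :: "mat2 set set \<Rightarrow> complex \<Rightarrow> bool" where
  "elliptic_even G z \<longleftrightarrow> z \<in> uhp \<and> finite (stab G z) \<and> even (card (stab G z))"

text \<open>The point of X_Gamma represented by z is the orbit of z.\<close>
definition orbit :: "mat2 set set \<Rightarrow> complex \<Rightarrow> complex set" where
  "orbit G z = {act g z | g. g \<in> G}"

text \<open>A point of X_Gamma (represented by z in the upper half-plane) is real iff it is
  fixed by the involution induced by c_0.\<close>
definition real_point_c0 :: "mat2 set set \<Rightarrow> complex \<Rightarrow> bool" where
  "real_point_c0 G z \<longleftrightarrow> orbit G (c0 z) = orbit G z"

end

theory Submission
  imports Defs
begin

text \<open>An elliptic point \<open>z\<close> of even order has a stabiliser of even order, which therefore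
  contains an element of order two, i.e. a trace-zero matrix \<open>[[a,b],[c,-a]]\<close>. If \<open>z\<close> is
  moreover a real point, some \<open>[[p,q],[r,s]]\<close> in \<open>\<Gamma>\<close> maps \<open>z\<close> to \<open>-z\<^sup>*\<close>; comparing real and
  imaginary parts gives \<open>p = s\<close> and \<open>2pa + qc - rb = 0\<close>. As \<open>N\<close> divides \<open>c\<close> and \<open>r\<close>, this
  forces \<open>N | 2a\<close> and \<open>N | a\<^sup>2 + 1\<close>, which is impossible for \<open>N > 2\<close>.\<close>

lemma mneg_mneg [simp]: "mneg (mneg A) = A"
  by (cases A) simp

lemma mmul_mneg_left: "mmul (mneg A) B = mneg (mmul A B)"
  by (cases A, cases B) (simp add: algebra_simps)

lemma mmul_mneg_right: "mmul A (mneg B) = mneg (mmul A B)"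
  by (cases A, cases B) (simp add: algebra_simps)

lemma mmul_assoc: "mmul (mmul A B) C = mmul A (mmul B C)"
  by (cases A, cases B, cases C) (simp add: algebra_simps)

lemma mmul_sl2z: "A \<in> sl2z \<Longrightarrow> B \<in> sl2z \<Longrightarrow> mmul A B \<in> sl2z"
proof (cases A, cases B)
  fix a b c d a' b' c' d'
  assume "A \<in> sl2z" "B \<in> sl2z" "A = (a,b,c,d)" "B = (a',b',c',d')"
  moreover have "(a*a' + b*c') * (c*b' + d*d') - (a*b' + b*d') * (c*a' + d*c')
                 = (a*d - b*c) * (a'*d' - b'*c')"
    by (simp add: algebra_simps)
  ultimately show ?thesis by (simp add: sl2z_def)
qed

lemma moeb_mneg: "moeb (mneg A) z = moeb A z"
proof (cases A)
  case (fields a b c d)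
  have "(- (of_int a * z + of_int b)) / (- (of_int c * z + of_int d))
        = (of_int a * z + of_int b) / (of_int c * z + of_int d)"
    by (rule minus_divide_divide)
  then show ?thesis by (simp add: fields)
qed

lemma pclass_eq_iff: "pclass A = pclass B \<longleftrightarrow> B = A \<or> B = mneg A"
  by (auto simp: pclass_def doubleton_eq_iff)

lemma pmul_pclass: "pmul (pclass A) (pclass B) = pclass (mmul A B)"
proof -
  have "pmul (pclass A) (pclass B)
        = {mmul A B, mmul A (mneg B), mmul (mneg A) B, mmul (mneg A) (mneg B)}"
    unfolding pmul_def pclass_def by blast
  then show ?thesis
    by (auto simp: mmul_mneg_left mmul_mneg_right pclass_def simp del: mmul.simps mneg.simps)
qed

lemma act_pclass: "act (pclass A) z = moeb A z"
proof -
  have "(SOME M. M \<in> pclass A) \<in> pclass A"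
    by (rule someI[of _ A]) (simp add: pclass_def)
  then show ?thesis
    unfolding act_def pclass_def by (auto simp: moeb_mneg)
qed

lemma carrier_PSL2Z_E:
  assumes "X \<in> carrier PSL2Z"
  obtains a b c d where "X = pclass (a,b,c,d)" "a*d - b*c = 1"
  using assms by (force simp: PSL2Z_def psl2z_def sl2z_def)

lemma group_PSL2Z: "group PSL2Z"
proof (rule groupI)
  fix X Y assume "X \<in> carrier PSL2Z" "Y \<in> carrier PSL2Z"
  then obtain A B where "A \<in> sl2z" "B \<in> sl2z" "X = pclass A" "Y = pclass B"
    by (auto simp: PSL2Z_def psl2z_def)
  then show "X \<otimes>\<^bsub>PSL2Z\<^esub> Y \<in> carrier PSL2Z"
    by (simp add: PSL2Z_def psl2z_def pmul_pclass mmul_sl2z del: mmul.simps)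
next
  fix X Y Z assume "X \<in> carrier PSL2Z" "Y \<in> carrier PSL2Z" "Z \<in> carrier PSL2Z"
  then obtain A B C where "X = pclass A" "Y = pclass B" "Z = pclass C"
    by (auto simp: PSL2Z_def psl2z_def)
  then show "(X \<otimes>\<^bsub>PSL2Z\<^esub> Y) \<otimes>\<^bsub>PSL2Z\<^esub> Z = X \<otimes>\<^bsub>PSL2Z\<^esub> (Y \<otimes>\<^bsub>PSL2Z\<^esub> Z)"
    by (simp add: PSL2Z_def pmul_pclass mmul_assoc del: mmul.simps)
next
  show "\<one>\<^bsub>PSL2Z\<^esub> \<in> carrier PSL2Z"
    by (simp add: PSL2Z_def psl2z_def sl2z_def)
next
  fix X assume "X \<in> carrier PSL2Z"
  then obtain a b c d where X: "X = pclass (a,b,c,d)" and det: "a*d - b*c = 1"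
    by (rule carrier_PSL2Z_E)
  show "\<one>\<^bsub>PSL2Z\<^esub> \<otimes>\<^bsub>PSL2Z\<^esub> X = X"
    by (simp add: X PSL2Z_def pmul_pclass)
  have "pclass (d,-b,-c,a) \<in> carrier PSL2Z"
    using det by (simp add: PSL2Z_def psl2z_def sl2z_def algebra_simps)
  moreover have "pclass (d,-b,-c,a) \<otimes>\<^bsub>PSL2Z\<^esub> X = \<one>\<^bsub>PSL2Z\<^esub>"
    using det by (simp add: X PSL2Z_def pmul_pclass algebra_simps)
  ultimately show "\<exists>Y \<in> carrier PSL2Z. Y \<otimes>\<^bsub>PSL2Z\<^esub> X = \<one>\<^bsub>PSL2Z\<^esub>" by blast
qed

lemma inv_PSL2Z_pclass:
  assumes "a*d - b*c = 1"
  shows "inv\<^bsub>PSL2Z\<^esub> (pclass (a,b,c,d)) = pclass (d,-b,-c,a)"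
  using assms
  by (intro group.inv_equality[OF group_PSL2Z])
     (auto simp: PSL2Z_def psl2z_def sl2z_def pmul_pclass algebra_simps)

lemma even_card_fixpoint_free_involution:
  assumes "finite T" and "\<And>x. x \<in> T \<Longrightarrow> f x \<in> T \<and> f (f x) = x \<and> f x \<noteq> x"
  shows "even (card T)"
proof -
  define C where "C = (\<lambda>x. {x, f x}) ` T"
  have orbit_eq: "c = {z, f z}" if cz: "c \<in> C" "z \<in> c" for c z
  proof -
    obtain x where "x \<in> T" "c = {x, f x}"
      using cz(1) by (auto simp: C_def)
    moreover from this have "f (f x) = x"
      using assms(2) by blast
    ultimately show ?thesis
      using cz(2) by (auto simp: insert_commute)
  qed
  have "\<Union>C = T"
    using assms(2) by (auto simp: C_def)
  moreover have "2 * card C = card (\<Union>C)"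
  proof (rule card_partition)
    show "finite C" using assms(1) by (simp add: C_def)
    then show "finite (\<Union>C)" using \<open>\<Union>C = T\<close> assms(1) by simp
    show "card c = 2" if "c \<in> C" for c
      using that by (auto simp: C_def dest: assms(2))
    show "c1 \<inter> c2 = {}" if "c1 \<in> C" "c2 \<in> C" "c1 \<noteq> c2" for c1 c2
      using that orbit_eq by blast
  qed
  ultimately show ?thesis by (metis dvd_triv_left)
qed

text \<open>The elements not fixed by the inversion pair off, so the involutions together
  with the unit are even in number.\<close>
lemma (in group) even_card_obtains_involution:
  assumes "finite H" "H \<subseteq> carrier G" "\<one> \<in> H" "\<And>x. x \<in> H \<Longrightarrow> inv x \<in> H"
    and "even (card H)"
  obtains x where "x \<in> H" "x \<noteq> \<one>" "inv x = x"
proof -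
  define F where "F = {x \<in> H. inv x = x}"
  have "F \<subseteq> H" by (auto simp: F_def)
  have "even (card (H - F))"
    using assms(1,2,4)
    by (intro even_card_fixpoint_free_involution[where f = "\<lambda>x. inv x"]) (auto simp: F_def subsetD)
  moreover have "card H = card F + card (H - F)"
    using \<open>F \<subseteq> H\<close> assms(1) by (metis card_Diff_subset card_mono finite_subset le_add_diff_inverse)
  ultimately have "even (card F)"
    using assms(5) by simp
  moreover have "\<one> \<in> F"
    using assms(3) by (simp add: F_def)
  ultimately have "F \<noteq> {\<one>}" by auto
  then show ?thesis
    using \<open>\<one> \<in> F\<close> that by (auto simp: F_def)
qed

lemma moeb_denominator_nonzero:
  assumes "a*d - b*c = 1" and "Im z > 0"
  shows "of_int c * z + of_int d \<noteq> 0"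
proof
  assume den: "of_int c * z + of_int d = 0"
  then have "Im (of_int c * z + of_int d) = 0" by simp
  then have "of_int c * Im z = 0" by simp
  then have "c = 0" using assms(2) by simp
  then show False using den assms(1) by simp
qed

lemma moeb_adjugate_fixed:
  assumes det: "a*d - b*c = 1" and "Im z > 0" and fixed: "moeb (a,b,c,d) z = z"
  shows "moeb (d,-b,-c,a) z = z"
proof -
  have "of_int a * z + of_int b = z * (of_int c * z + of_int d)"
    using fixed moeb_denominator_nonzero[OF det \<open>Im z > 0\<close>] by (simp add: divide_eq_eq)
  then have "of_int d * z + of_int (-b) = z * (of_int (-c) * z + of_int a)"
    by (simp add: algebra_simps)
  moreover have "of_int (-c) * z + of_int a \<noteq> 0"
    using moeb_denominator_nonzero[where a = d and b = "-b" and c = "-c" and d = a] det \<open>Im z > 0\<close>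
    by (simp add: algebra_simps)
  ultimately show ?thesis by (simp only: moeb.simps divide_eq_eq) simp
qed

lemma act_one_PSL2Z [simp]: "act \<one>\<^bsub>PSL2Z\<^esub> z = z"
  by (simp add: PSL2Z_def act_pclass)

lemma stab_inv_closed:
  assumes "subgroup G PSL2Z" "Im z > 0" "X \<in> stab G z"
  shows "inv\<^bsub>PSL2Z\<^esub> X \<in> stab G z"
proof -
  have "X \<in> G" and fixed: "act X z = z" using assms(3) by (auto simp: stab_def)
  then obtain a b c d where X: "X = pclass (a,b,c,d)" and det: "a*d - b*c = 1"
    using subgroup.subset[OF assms(1)] by (blast elim: carrier_PSL2Z_E)
  have "inv\<^bsub>PSL2Z\<^esub> X \<in> G"
    using subgroup.m_inv_closed[OF assms(1) \<open>X \<in> G\<close>] .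
  moreover have "moeb (a,b,c,d) z = z"
    using fixed by (simp only: X act_pclass)
  then have "act (inv\<^bsub>PSL2Z\<^esub> X) z = z"
    by (simp only: X inv_PSL2Z_pclass[OF det] act_pclass
        moeb_adjugate_fixed[OF det \<open>Im z > 0\<close>])
  ultimately show ?thesis by (simp add: stab_def)
qed

lemma involution_PSL2Z_trace_zero:
  assumes det: "a*d - b*c = 1"
    and inv: "inv\<^bsub>PSL2Z\<^esub> (pclass (a,b,c,d)) = pclass (a,b,c,d)"
    and nontrivial: "pclass (a,b,c,d) \<noteq> \<one>\<^bsub>PSL2Z\<^esub>"
  shows "d = -a"
proof -
  have "(a,b,c,d) = (d,-b,-c,a) \<or> (a,b,c,d) = mneg (d,-b,-c,a)"
    using inv unfolding inv_PSL2Z_pclass[OF det] pclass_eq_iff .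
  moreover have "(a,b,c,d) \<noteq> (d,-b,-c,a)"
  proof
    assume "(a,b,c,d) = (d,-b,-c,a)"
    then have "b = 0" "c = 0" "d = a" unfolding prod.inject by linarith+
    then have "a = 1 \<or> a = -1" using det zmult_eq_1_iff[of a a] by simp
    then have "pclass (a,b,c,d) = pclass (1,0,0,1)"
      using \<open>b = 0\<close> \<open>c = 0\<close> \<open>d = a\<close> by (auto simp: pclass_def)
    then show False
      using nontrivial by (simp add: PSL2Z_def)
  qed
  ultimately show ?thesis by auto
qed

lemma Gamma0E:
  assumes "X \<in> Gamma0 N"
  obtains a b c d where "X = pclass (a,b,c,d)" "a*d - b*c = 1" "int N dvd c"
  using assms by (force simp: Gamma0_def sl2z_def)

lemma elliptic_even_obtains_trace_zero:
  assumes G: "subgroup G PSL2Z" and "elliptic_even G z"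
  obtains a b c where "pclass (a,b,c,-a) \<in> G" "-a*a - b*c = 1" "moeb (a,b,c,-a) z = z"
proof -
  have "Im z > 0" "finite (stab G z)" "even (card (stab G z))"
    using assms(2) by (simp_all add: elliptic_even_def uhp_def)
  moreover have "stab G z \<subseteq> carrier PSL2Z"
    using subgroup.subset[OF G] by (auto simp: stab_def)
  moreover have "\<one>\<^bsub>PSL2Z\<^esub> \<in> stab G z"
    using subgroup.one_closed[OF G] by (simp add: stab_def)
  ultimately obtain X where X: "X \<in> stab G z" "X \<noteq> \<one>\<^bsub>PSL2Z\<^esub>" "inv\<^bsub>PSL2Z\<^esub> X = X"
    using group.even_card_obtains_involution[OF group_PSL2Z] stab_inv_closed[OF G] by metis
  then have "X \<in> G" "act X z = z" by (auto simp: stab_def)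
  moreover obtain a b c d where "X = pclass (a,b,c,d)" and det: "a*d - b*c = 1"
    using \<open>X \<in> G\<close> subgroup.subset[OF G] by (blast elim: carrier_PSL2Z_E)
  moreover have "d = -a"
    using X calculation by (blast intro: involution_PSL2Z_trace_zero)
  ultimately show ?thesis
    using that by (simp add: act_pclass)
qed

lemma real_point_c0_obtains:
  assumes "subgroup G PSL2Z" and "real_point_c0 G z"
  obtains h where "h \<in> G" "act h z = c0 z"
proof -
  have "c0 z = act \<one>\<^bsub>PSL2Z\<^esub> (c0 z)" by simp
  then have "c0 z \<in> orbit G (c0 z)"
    using subgroup.one_closed[OF assms(1)] unfolding orbit_def by blast
  then have "c0 z \<in> orbit G z"
    using assms(2) by (simp add: real_point_c0_def)
  then show ?thesis
    using that by (auto simp: orbit_def)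
qed

text \<open>Writing \<open>z = x + iy\<close>: the fixed point equation \<open>c z\<^sup>2 - 2az - b = 0\<close> gives
  \<open>a = cx\<close> and \<open>c |z|\<^sup>2 = -b\<close>, and \<open>pz + q = -z\<^sup>*(rz + s)\<close> gives \<open>p = s\<close> and
  \<open>2px + q + r|z|\<^sup>2 = 0\<close>; multiplying the last equation by \<open>c\<close> eliminates \<open>z\<close>.\<close>
lemma trace_zero_fixed_point_c0_image:
  fixes a b c p q r s :: int and z :: complex
  assumes "Im z > 0" and det1: "-a*a - b*c = 1" and det2: "p*s - q*r = 1"
    and fixed: "moeb (a,b,c,-a) z = z" and image: "moeb (p,q,r,s) z = c0 z"
  shows "p = s \<and> 2*p*a + q*c - r*b = 0"
proof -
  define x y where "x = Re z" and "y = Im z"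
  have "y > 0" using assms(1) by (simp add: y_def)
  have den1: "of_int c * z + of_int (-a) \<noteq> 0"
    using moeb_denominator_nonzero[where d = "-a"] det1 assms(1) by (simp add: algebra_simps)
  have den2: "of_int r * z + of_int s \<noteq> 0"
    using moeb_denominator_nonzero det2 assms(1) by blast
  have "of_int a * z + of_int b = z * (of_int c * z + of_int (-a))"
    using fixed den1 by (simp add: divide_eq_eq)
  then have fixed_Re: "c*(x*x - y*y) = 2*a*x + b" and "a = c*x"
    using \<open>y > 0\<close> by (auto simp: x_def y_def complex_eq_iff algebra_simps)
  have "of_int p * z + of_int q = - cnj z * (of_int r * z + of_int s)"
    using image den2 by (simp add: c0_def divide_eq_eq)
  then have image_Re: "p*x + q + r*(x*x + y*y) + s*x = 0" and ps: "real_of_int p = s"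
    using \<open>y > 0\<close> by (auto simp: x_def y_def complex_eq_iff algebra_simps)
  have "c*(x*x + y*y) = -b"
    using fixed_Re \<open>a = c*x\<close> by (simp add: algebra_simps)
  then have "real_of_int (2*p*a + q*c - r*b) = 2*p*(c*x) + q*c + r*(c*(x*x + y*y))"
    using \<open>a = c*x\<close> by simp
  also have "\<dots> = c*(p*x + q + r*(x*x + y*y) + s*x)"
    using ps by (simp add: algebra_simps)
  also have "\<dots> = 0"
    using image_Re by simp
  finally have "2*p*a + q*c - r*b = 0"
    by (simp only: of_int_eq_0_iff)
  then show ?thesis
    using ps by simp
qed

lemma pclass_in_Gamma0_dvd:
  assumes "pclass (a,b,c,d) \<in> Gamma0 N"
  shows "int N dvd c"
proof -
  obtain M where "M \<in> sl2z" "int N dvd fst (snd (snd M))" "pclass (a,b,c,d) = pclass M"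
    using assms by (auto simp: Gamma0_def)
  then show ?thesis
    by (cases M) (auto simp: pclass_eq_iff)
qed

text \<open>\<open>N\<close> divides \<open>4 = 4(a\<^sup>2 + 1) - (2a)\<^sup>2\<close>, which leaves \<open>N = 4\<close>; but then \<open>a\<close> is even
  and \<open>a\<^sup>2 + 1\<close> is odd.\<close>
lemma not_dvd_double_and_square_plus_one:
  fixes a :: int
  assumes "N > 2" and "int N dvd 2*a" and "int N dvd a*a + 1"
  shows False
proof -
  have "int N dvd 4*(a*a + 1)"
    using assms(3) by (rule dvd_mult)
  moreover have "int N dvd (2*a)*(2*a)"
    using assms(2) by (rule dvd_mult2)
  ultimately have "int N dvd 4*(a*a + 1) - (2*a)*(2*a)"
    by (rule dvd_diff)
  then have "int N dvd int 4"
    by (simp add: algebra_simps)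
  then have "N dvd 4"
    by (simp only: int_dvd_int_iff)
  moreover from this have "N \<noteq> 3" by auto
  ultimately have "N = 4"
    using assms(1) dvd_imp_le[of N 4] by linarith
  then obtain k where "2*a = 4*k"
    using assms(2) by auto
  then have "even a" by presburger
  moreover have "even (a*a + 1)"
    using \<open>N = 4\<close> assms(3) dvd_trans[of 2 4 "a*a + 1"] by simp
  ultimately show False by simp
qed

lemma no_trace_zero_reflection_mod_level:
  fixes a b c p q r :: int
  assumes "N > 2" and "int N dvd c" and "int N dvd r"
    and "-a*a - b*c = 1" and "p*p - q*r = 1" and "2*p*a + q*c - r*b = 0"
  shows False
proof -
  have "coprime (int N) p"
  proof (rule coprimeI)
    fix k assume "k dvd int N" "k dvd p"
    then have "k dvd p*p - q*r"
      using assms(3) by (meson dvd_diff dvd_mult dvd_mult2 dvd_trans)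
    then show "is_unit k"
      using assms(5) by simp
  qed
  moreover have "int N dvd p*(2*a)"
  proof -
    have "p*(2*a) = r*b - q*c" using assms(6) by (simp add: algebra_simps)
    then show ?thesis using assms(2,3) by (simp add: dvd_diff dvd_mult)
  qed
  ultimately have "int N dvd 2*a"
    using coprime_dvd_mult_right_iff by blast
  moreover have "int N dvd a*a + 1"
  proof -
    have "a*a + 1 = -(b*c)" using assms(4) by simp
    then show ?thesis using assms(2) by simp
  qed
  ultimately show False
    using not_dvd_double_and_square_plus_one assms(1) by blast
qed

theorem proposition5p11:
  fixes G :: "mat2 set set" and N :: nat
  assumes "real_congruence_group_c0 G"
    and "N > 2" and "G \<subseteq> Gamma0 N"
  shows "\<not> (\<exists>z \<in> uhp. elliptic_even G z \<and> real_point_c0 G z)"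
proof
  assume "\<exists>z \<in> uhp. elliptic_even G z \<and> real_point_c0 G z"
  then obtain z where "elliptic_even G z" "real_point_c0 G z" by blast
  have G: "subgroup G PSL2Z"
    using assms(1) by (simp add: real_congruence_group_c0_def)
  obtain a b c where X: "pclass (a,b,c,-a) \<in> G" "-a*a - b*c = 1" "moeb (a,b,c,-a) z = z"
    using elliptic_even_obtains_trace_zero[OF G \<open>elliptic_even G z\<close>] by blast
  obtain h where "h \<in> G" and h: "act h z = c0 z"
    using real_point_c0_obtains[OF G \<open>real_point_c0 G z\<close>] by blast
  then obtain p q r s where "h = pclass (p,q,r,s)" "p*s - q*r = 1" "int N dvd r"
    using assms(3) by (blast elim: Gamma0E)
  moreover have "Im z > 0"
    using \<open>elliptic_even G z\<close> by (simp add: elliptic_even_def uhp_def)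
  ultimately have "p = s" "2*p*a + q*c - r*b = 0"
    using trace_zero_fixed_point_c0_image[OF _ X(2) _ X(3)] h by (simp_all add: act_pclass)
  moreover have "int N dvd c"
    using X(1) assms(3) by (blast intro: pclass_in_Gamma0_dvd)
  ultimately show False
    using no_trace_zero_reflection_mod_level[OF assms(2) _ \<open>int N dvd r\<close> X(2)] \<open>p*s - q*r = 1\<close>
    by simp
qed

end
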